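(* Let $K$ be a field of characteristic zero, $0\ne c\in K$, $\phi$ the $K$-algebra endomorphism of $K[x]$ with $\phi(x)=x+c$, and $\delta=\mathrm{id}-\phi$. Let $a\in K$, $I$ the ideal generated by $x^2-ax$, $\beta=a/c$, and $D_n(t)=\frac{B_{n+1}(t)-B_{n+1}}{(n+1)t}\in\mathbb{Q}[t]$ for $n\ge0$. Let $f(x)=\sum_{i=0}^d a_ix^i\in K[x]$. Then $f\in\delta(I)$ if and only if $\sum_{i=0}^d a_iD_i(\beta)c^i=0$.
   Context: $\mathrm{id}$ is the identity map of $K[x]$. The Bernoulli polynomials are defined by $\frac{ue^{tu}}{e^u-1}=\sum_{n\ge0}B_n(t)\frac{u^n}{n!}$, and $B_n=B_n(0)$ are the Bernoulli numbers. *)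

theory Defs
  imports "HOL-Computational_Algebra.Computational_Algebra"
begin

text \<open>Bernoulli polynomials via the generating function
  u e^{tu}/(e^u - 1) = sum_n B_n(t) u^n/n!, as a formal power series in u.\<close>
definition bernoulli_gf :: "'a::field_char_0 \<Rightarrow> 'a fps" where
  "bernoulli_gf t = fps_X * fps_exp t / (fps_exp 1 - 1)"

definition bernoulli_val :: "nat \<Rightarrow> 'a::field_char_0 \<Rightarrow> 'a" where
  "bernoulli_val n t = fact n * fps_nth (bernoulli_gf t) n"

definition bernoulli_num :: "nat \<Rightarrow> 'a::field_char_0" where
  "bernoulli_num n = bernoulli_val n 0"

definition bernpoly :: "nat \<Rightarrow> 'a::field_char_0 poly" where
  "bernpoly n = (THE p. \<forall>t. poly p t = bernoulli_val n t)"

definition Dpoly :: "nat \<Rightarrow> 'a::field_char_0 poly" where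
  "Dpoly n = (bernpoly (Suc n) - [:bernoulli_num (Suc n):]) div [:0, of_nat (Suc n):]"

definition shift_phi :: "'a::comm_ring_1 \<Rightarrow> 'a poly \<Rightarrow> 'a poly" where
  "shift_phi c f = pcompose f [:c, 1:]"

definition delta_op :: "'a::comm_ring_1 \<Rightarrow> 'a poly \<Rightarrow> 'a poly" where
  "delta_op c f = f - shift_phi c f"

end

theory Submission
  imports Defs
begin

text \<open>With \<open>L(x) = \<Sum> a\<^sub>i c\<^sup>i D\<^sub>i(x/c)\<close>, the telescoping identity
  \<open>(t+1) D\<^sub>n(t+1) - t D\<^sub>n(t) = t\<^sup>n\<close> makes \<open>P(x) = (x/c) L(x)\<close> an antidifference of \<open>f\<close>:
  \<open>P(x+c) - P(x) = f(x)\<close>. A \<open>c\<close>-periodic polynomial is constant, so \<open>\<delta> h = f\<close> forces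
  \<open>h = k - P\<close>; if \<open>x(x-a)\<close> divides \<open>h\<close>, evaluation at \<open>0\<close> gives \<open>k = 0\<close>. Hence
  \<open>f \<in> \<delta>(I)\<close> iff \<open>x(x-a)\<close> divides \<open>x L(x)\<close>, i.e. iff \<open>L(a) = 0\<close>.\<close>

lemma fps_exp_1_minus_1_nonzero: "fps_exp (1::'a::field_char_0) - 1 \<noteq> 0"
proof
  assume "fps_exp (1::'a) - 1 = 0"
  hence "(fps_exp (1::'a) - 1) $ 1 = 0" by simp
  thus False by simp
qed

lemma bernoulli_gf_mult_denom:
  "bernoulli_gf (t::'a::field_char_0) * (fps_exp 1 - 1) = fps_X * fps_exp t"
proof -
  let ?E = "fps_exp (1::'a) - 1"
  let ?S = "fps_shift 1 ?E"
  have E_eq: "?E = fps_X * ?S" by (intro fps_ext) auto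
  have S0: "?S $ 0 \<noteq> 0" by simp
  have "fps_X * fps_exp t = ?E * (fps_exp t * inverse ?S)"
    by (subst E_eq) (metis (no_types, lifting) S0 inverse_mult_eq_1' mult.commute mult.left_commute mult_1_right)
  hence "?E dvd fps_X * fps_exp t" by (rule dvdI)
  thus ?thesis unfolding bernoulli_gf_def by simp
qed

lemma bernoulli_gf_eq_exp_mult:
  "bernoulli_gf (t::'a::field_char_0) = fps_exp t * bernoulli_gf 0"
proof -
  have "bernoulli_gf t * (fps_exp 1 - 1) = (fps_exp t * bernoulli_gf 0) * (fps_exp 1 - 1)"
    by (simp only: bernoulli_gf_mult_denom mult.assoc) simp
  thus ?thesis using fps_exp_1_minus_1_nonzero by (simp add: mult_right_cancel)
qed

lemma bernoulli_gf_diff: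
  "bernoulli_gf ((t::'a::field_char_0) + 1) - bernoulli_gf t = fps_X * fps_exp t"
proof -
  have "(bernoulli_gf (t + 1) - bernoulli_gf t) * (fps_exp 1 - 1)
      = fps_X * fps_exp (t + 1) - fps_X * fps_exp t"
    by (simp only: left_diff_distrib bernoulli_gf_mult_denom)
  also have "\<dots> = (fps_X * fps_exp t) * (fps_exp 1 - 1)"
    by (simp add: fps_exp_add_mult algebra_simps)
  finally show ?thesis using fps_exp_1_minus_1_nonzero by (simp add: mult_right_cancel)
qed

lemma bernoulli_val_Suc_diff:
  "bernoulli_val (Suc n) ((t::'a::field_char_0) + 1) - bernoulli_val (Suc n) t = of_nat (Suc n) * t ^ n"
proof -
  have "bernoulli_val (Suc n) (t + 1) - bernoulli_val (Suc n) t
     = fact (Suc n) * ((bernoulli_gf (t + 1) - bernoulli_gf t) $ Suc n)"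
    by (simp add: bernoulli_val_def algebra_simps)
  also have "\<dots> = fact (Suc n) * (t ^ n / fact n)" by (simp add: bernoulli_gf_diff)
  also have "\<dots> = of_nat (Suc n) * t ^ n" by (simp add: fact_Suc field_simps)
  finally show ?thesis .
qed

lemma bernoulli_val_is_poly: "\<exists>p. \<forall>t. poly p t = bernoulli_val n (t::'a::field_char_0)"
proof -
  let ?G = "bernoulli_gf (0::'a)"
  have "bernoulli_val n t = poly (\<Sum>i=0..n. monom (fact n * ?G $ (n - i) / fact i) i) t" for t
  proof -
    have "bernoulli_gf t $ n = (\<Sum>i=0..n. t ^ i / fact i * ?G $ (n - i))"
      by (subst bernoulli_gf_eq_exp_mult) (simp add: fps_mult_nth)
    thus ?thesis by (simp add: bernoulli_val_def poly_sum poly_monom sum_distrib_left mult_ac)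
  qed
  thus ?thesis by metis
qed

lemma poly_bernpoly: "poly (bernpoly n) t = bernoulli_val n (t::'a::field_char_0)"
proof -
  obtain p where p: "\<forall>t. poly p t = bernoulli_val n (t::'a)" using bernoulli_val_is_poly by blast
  have "\<forall>t. poly (bernpoly n) t = bernoulli_val n (t::'a)"
    unfolding bernpoly_def
  proof (rule theI[where a = p])
    show "\<forall>t. poly p t = bernoulli_val n t" by fact
    fix q :: "'a poly"
    assume "\<forall>t. poly q t = bernoulli_val n t"
    hence "poly q = poly p" using p by auto
    thus "q = p" by (simp add: poly_eq_poly_eq_iff)
  qed
  thus ?thesis by blast
qed

lemma Dpoly_mult_linear:
  "[:0, of_nat (Suc n):] * Dpoly n = bernpoly (Suc n) - [:bernoulli_num (Suc n)::'a::field_char_0:]"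
proof -
  let ?q = "bernpoly (Suc n) - [:bernoulli_num (Suc n)::'a:]"
  have "poly ?q 0 = 0" by (simp add: poly_bernpoly bernoulli_num_def)
  hence "[:0, 1:] dvd ?q" using poly_eq_0_iff_dvd[of ?q 0] by simp
  moreover have "[:0, of_nat (Suc n)::'a:] = smult (of_nat (Suc n)) [:0, 1:]" by simp
  ultimately have "[:0, of_nat (Suc n)::'a:] dvd ?q"
    by (metis dvd_smult_cancel of_nat_eq_0_iff nat.distinct(1) smult_dvd_iff)
  thus ?thesis unfolding Dpoly_def by (rule dvd_mult_div_cancel)
qed

lemma Dpoly_difference:
  "(t + 1) * poly (Dpoly n) (t + 1) - t * poly (Dpoly n) t = (t::'a::field_char_0) ^ n"
proof -
  have D: "of_nat (Suc n) * (s * poly (Dpoly n) s) = bernoulli_val (Suc n) s - bernoulli_num (Suc n)"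
    for s :: 'a
    using arg_cong[OF Dpoly_mult_linear[of n], of "\<lambda>p. poly p s"]
    by (simp add: poly_bernpoly algebra_simps)
  have "of_nat (Suc n) * ((t + 1) * poly (Dpoly n) (t + 1) - t * poly (Dpoly n) t)
      = of_nat (Suc n) * t ^ n"
    by (simp only: right_diff_distrib D bernoulli_val_Suc_diff[symmetric]) simp
  thus ?thesis by (simp del: of_nat_Suc)
qed

lemma periodic_poly_const:
  fixes p :: "'a::field_char_0 poly"
  assumes "c \<noteq> 0" and periodic: "\<And>x. poly p (x + c) = poly p x"
  shows "p = [:poly p 0:]"
proof (rule ccontr)
  let ?q = "p - [:poly p 0:]"
  assume "p \<noteq> [:poly p 0:]"
  hence "finite {x. poly ?q x = 0}" by (intro poly_roots_finite) simp
  moreover have "poly p (of_nat n * c) = poly p 0" for n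
    by (induction n) (auto simp: algebra_simps periodic[of "of_nat n * c" for n, simplified algebra_simps])
  hence "range (\<lambda>n::nat. of_nat n * c) \<subseteq> {x. poly ?q x = 0}" by auto
  moreover have "inj (\<lambda>n::nat. of_nat n * c)" using \<open>c \<noteq> 0\<close> by (auto intro!: injI)
  ultimately show False by (meson finite_subset range_inj_infinite)
qed

lemma delta_op_eq_iff:
  fixes P f h :: "'a::field_char_0 poly"
  assumes "c \<noteq> 0" and antidiff: "\<And>x. poly P (x + c) - poly P x = poly f x"
  shows "delta_op c h = f \<longleftrightarrow> (\<exists>k. h = [:k:] - P)"
proof -
  have poly_delta: "poly (delta_op c h) x = poly h x - poly h (x + c)" for x
    by (simp add: delta_op_def shift_phi_def poly_pcompose add.commute)
  have "delta_op c h = f \<longleftrightarrow> (\<forall>x. poly h x - poly h (x + c) = poly P (x + c) - poly P x)"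
    by (simp add: poly_eq_poly_eq_iff[symmetric] fun_eq_iff poly_delta antidiff)
  also have "\<dots> \<longleftrightarrow> (\<forall>x. poly (h + P) (x + c) = poly (h + P) x)"
    by (simp add: algebra_simps) metis
  also have "\<dots> \<longleftrightarrow> (\<exists>k. h + P = [:k:])"
  proof
    assume "\<forall>x. poly (h + P) (x + c) = poly (h + P) x"
    thus "\<exists>k. h + P = [:k:]" using periodic_poly_const[OF \<open>c \<noteq> 0\<close>, of "h + P"] by blast
  qed (elim exE, simp)
  also have "\<dots> \<longleftrightarrow> (\<exists>k. h = [:k:] - P)" by (auto simp: algebra_simps)
  finally show ?thesis .
qed

lemma delta_op_image_ideal_iff:
  fixes P f p :: "'a::field_char_0 poly"
  assumes "c \<noteq> 0" and antidiff: "\<And>x. poly P (x + c) - poly P x = poly f x"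
    and "poly P 0 = 0" and "poly p 0 = 0"
  shows "f \<in> delta_op c ` {g * p | g. True} \<longleftrightarrow> p dvd P"
proof
  assume "f \<in> delta_op c ` {g * p | g. True}"
  then obtain g where "delta_op c (g * p) = f" by auto
  then obtain k where k: "g * p = [:k:] - P"
    using delta_op_eq_iff[OF \<open>c \<noteq> 0\<close> antidiff] by blast
  have "k = 0" using arg_cong[OF k, of "\<lambda>q. poly q 0"] assms(3,4) by simp
  hence "P = (- g) * p" using k by simp
  thus "p dvd P" by simp
next
  assume "p dvd P"
  then obtain g where "P = p * g" by (elim dvdE)
  hence "(- g) * p = [:0:] - P" by (simp add: mult.commute)
  hence "delta_op c ((- g) * p) = f"
    using delta_op_eq_iff[OF \<open>c \<noteq> 0\<close> antidiff] by blast
  thus "f \<in> delta_op c ` {g * p | g. True}" by blast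
qed

definition Dsum :: "'a::field_char_0 \<Rightarrow> 'a poly \<Rightarrow> 'a poly" where
  "Dsum c f = (\<Sum>i\<le>degree f. smult (coeff f i * c ^ i) (pcompose (Dpoly i) [:0, inverse c:]))"

lemma poly_Dsum: "poly (Dsum c f) x = (\<Sum>i\<le>degree f. coeff f i * c ^ i * poly (Dpoly i) (x / c))"
  by (simp add: Dsum_def poly_sum poly_pcompose divide_inverse mult_ac)

lemma Dsum_difference:
  fixes c :: "'a::field_char_0"
  assumes "c \<noteq> 0"
  shows "(x + c) / c * poly (Dsum c f) (x + c) - x / c * poly (Dsum c f) x = poly f x"
proof -
  have "(x + c) / c * poly (Dsum c f) (x + c) - x / c * poly (Dsum c f) x
     = (\<Sum>i\<le>degree f. coeff f i * c ^ i *
          ((x / c + 1) * poly (Dpoly i) (x / c + 1) - x / c * poly (Dpoly i) (x / c)))"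
    using assms
    by (simp add: poly_Dsum sum_distrib_left sum_subtractf[symmetric] add_divide_distrib algebra_simps)
  also have "\<dots> = (\<Sum>i\<le>degree f. coeff f i * x ^ i)"
    unfolding Dpoly_difference using assms by (simp add: power_divide)
  also have "\<dots> = poly f x" by (simp add: poly_altdef)
  finally show ?thesis .
qed

theorem corollary4p6:
  fixes c a :: "'a::field_char_0" and f :: "'a poly"
  assumes "c \<noteq> 0"
  shows "f \<in> delta_op c ` {g * [:0, - a, 1:] | g. True} \<longleftrightarrow>
         (\<Sum>i\<le>degree f. coeff f i * poly (Dpoly i) (a / c) * c ^ i) = 0"
proof -
  define P where "P = smult (inverse c) ([:0, 1:] * Dsum c f)"
  have "poly P (x + c) - poly P x = poly f x" for x
    using Dsum_difference[OF assms, of x f] by (simp add: P_def divide_inverse mult_ac)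
  moreover have "poly P 0 = 0" by (simp add: P_def)
  ultimately have "f \<in> delta_op c ` {g * [:0, - a, 1:] | g. True} \<longleftrightarrow> [:0, - a, 1:] dvd P"
    using delta_op_image_ideal_iff[OF assms, of P f "[:0, - a, 1:]"] by simp
  also have "\<dots> \<longleftrightarrow> [:0, - a, 1:] dvd [:0, 1:] * Dsum c f"
    unfolding P_def using assms by (subst dvd_smult_iff) simp_all
  also have "\<dots> \<longleftrightarrow> [:0, 1:] * [:- a, 1:] dvd [:0, 1:] * Dsum c f"
    by simp
  also have "\<dots> \<longleftrightarrow> poly (Dsum c f) a = 0"
    by (subst dvd_mult_cancel_left) (simp_all add: poly_eq_0_iff_dvd)
  also have "\<dots> \<longleftrightarrow> (\<Sum>i\<le>degree f. coeff f i * poly (Dpoly i) (a / c) * c ^ i) = 0"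
    by (simp add: poly_Dsum mult_ac)
  finally show ?thesis .
qed

end
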